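(* Let $K\ge2$ and $\alpha\in\mathbb{R}$, and define \[ C_{\alpha,K}:=2\cdot\inf\left\{\frac{D_\alpha(p\Vert q)}{\|p-q\|_1^2}: p,q\in\operatorname{relint}(\Delta^K),\ p\ne q\right\}. \] Then \[ C_{\alpha,K}=\inf\left\{\sum_{k=1}^K v_k^2\gamma_k^{\alpha-2}: v\in T^K,\ \gamma\in\operatorname{relint}(\Delta^K)\right\}, \] where $T^K:=\{v\in\mathbb{R}^K:\|v\|_1=1,\ \sum_{k=1}^K v_k=0\}$.
   Context: $\Delta^K=\{p\in[0,1]^K:\sum_k p_k=1\}$, $\operatorname{relint}(\Delta^K)=\Delta^K\cap(0,1)^K$. For $p\in(0,+\infty)^K$: $S_\alpha(p)=\frac{\sum_k p_k^\alpha}{\alpha(1-\alpha)}$ if $\alpha\notin\{0,1\}$, $S_0(p)=\sum_k\ln p_k$, $S_1(p)=-\sum_k p_k\ln p_k$. $D_\alpha(p\Vert q)=-S_\alpha(p)+S_\alpha(q)+\langle\nabla S_\alpha(q),p-q\rangle$ is the Bregman divergence of $-S_\alpha$ on $(0,+\infty)^K$. $\|x\|_1=\sum_k|x_k|$. *)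

theory Defs
  imports "HOL-Analysis.Analysis"
begin

text \<open>Vectors in R^K are represented as functions nat => real, with coordinates
  indexed by {..<K} (coordinates outside are irrelevant).\<close>

definition relint_simplex :: "nat \<Rightarrow> (nat \<Rightarrow> real) set" where
  "relint_simplex K = {p. (\<forall>k<K. 0 < p k \<and> p k < 1) \<and> (\<Sum>k<K. p k) = 1}"

definition S_alpha :: "real \<Rightarrow> nat \<Rightarrow> (nat \<Rightarrow> real) \<Rightarrow> real" where
  "S_alpha \<alpha> K p =
     (if \<alpha> = 0 then (\<Sum>k<K. ln (p k))
      else if \<alpha> = 1 then - (\<Sum>k<K. p k * ln (p k))
      else (\<Sum>k<K. p k powr \<alpha>) / (\<alpha> * (1 - \<alpha>)))"

text \<open>Partial derivative of S_alpha with respect to coordinate k, at a point q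
  with positive coordinates.\<close>
definition dS_alpha :: "real \<Rightarrow> (nat \<Rightarrow> real) \<Rightarrow> nat \<Rightarrow> real" where
  "dS_alpha \<alpha> q k =
     (if \<alpha> = 0 then 1 / q k
      else if \<alpha> = 1 then - ln (q k) - 1
      else q k powr (\<alpha> - 1) / (1 - \<alpha>))"

definition D_alpha :: "real \<Rightarrow> nat \<Rightarrow> (nat \<Rightarrow> real) \<Rightarrow> (nat \<Rightarrow> real) \<Rightarrow> real" where
  "D_alpha \<alpha> K p q = - S_alpha \<alpha> K p + S_alpha \<alpha> K q
      + (\<Sum>k<K. dS_alpha \<alpha> q k * (p k - q k))"

definition norm1 :: "nat \<Rightarrow> (nat \<Rightarrow> real) \<Rightarrow> real" where
  "norm1 K x = (\<Sum>k<K. \<bar>x k\<bar>)"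

definition T_set :: "nat \<Rightarrow> (nat \<Rightarrow> real) set" where
  "T_set K = {v. norm1 K v = 1 \<and> (\<Sum>k<K. v k) = 0}"

definition C_alpha :: "real \<Rightarrow> nat \<Rightarrow> real" where
  "C_alpha \<alpha> K = 2 * Inf {D_alpha \<alpha> K p q / (norm1 K (\<lambda>k. p k - q k))^2 | p q.
      p \<in> relint_simplex K \<and> q \<in> relint_simplex K \<and> (\<exists>k<K. p k \<noteq> q k)}"

end

theory Submission
  imports Defs
begin

text \<open>Taylor's theorem with Lagrange remainder along the segment from q to p gives
  D_\<alpha>(p||q) = 1/2 \<Sum>_k (p_k - q_k)^2 \<gamma>_k^(\<alpha>-2) for some point \<gamma> of that segment, which
  lies in the relative interior of the simplex again. Since p - q has coordinate sum 0, normalising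
  it to l1-norm 1 shows that twice every quotient D_\<alpha>(p||q) / ||p - q||_1^2 is a value of the
  right-hand side. Conversely, for p = \<gamma> + t v with t -> 0+ the intermediate point tends to \<gamma>,
  so twice the quotient approaches \<Sum>_k v_k^2 \<gamma>_k^(\<alpha>-2).\<close>

lemma convex_real_segment_mem:
  fixes x y s :: real
  assumes "convex I" "x \<in> I" "y \<in> I" "0 \<le> s" "s \<le> 1"
  shows "x + s * (y - x) \<in> I"
proof -
  have "(1 - s) *\<^sub>R x + s *\<^sub>R y \<in> I" using assms by (intro convexD_alt)
  moreover have "(1 - s) *\<^sub>R x + s *\<^sub>R y = x + s * (y - x)" by (simp add: algebra_simps)
  ultimately show ?thesis by simp
qed

lemma separable_bregman_lagrange:
  fixes f f' f'' :: "real \<Rightarrow> real" and p q :: "nat \<Rightarrow> real"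
  assumes "convex I"
    and f': "\<And>x. x \<in> I \<Longrightarrow> (f has_real_derivative f' x) (at x)"
    and f'': "\<And>x. x \<in> I \<Longrightarrow> (f' has_real_derivative f'' x) (at x)"
    and p: "\<And>k. k < K \<Longrightarrow> p k \<in> I" and q: "\<And>k. k < K \<Longrightarrow> q k \<in> I"
  obtains \<xi> where "0 < \<xi>" "\<xi> < 1"
    "(\<Sum>k<K. f (p k) - f (q k) - f' (q k) * (p k - q k))
       = (\<Sum>k<K. f'' (q k + \<xi> * (p k - q k)) * (p k - q k)^2) / 2"
proof -
  define d where "d k = p k - q k" for k
  \<comment> \<open>\<open>\<phi> ! m\<close> is the m-th derivative of \<open>s \<mapsto> \<Sum>k<K. f (q k + s * d k)\<close>, as Taylor_up expects\<close>
  define \<phi> where "\<phi> = (!)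
    [(\<lambda>s. \<Sum>k<K. f (q k + s * d k)),
     (\<lambda>s. \<Sum>k<K. f' (q k + s * d k) * d k),
     (\<lambda>s. \<Sum>k<K. f'' (q k + s * d k) * (d k)^2)]"
  have seg: "q k + s * d k \<in> I" if "0 \<le> s" "s \<le> 1" "k < K" for s k
    unfolding d_def using assms(1) p q that by (intro convex_real_segment_mem)
  have along_segment: "((\<lambda>s. g (q k + s * d k)) has_real_derivative g' (q k + s * d k) * d k) (at s)"
    if "\<And>x. x \<in> I \<Longrightarrow> (g has_real_derivative g' x) (at x)" "0 \<le> s" "s \<le> 1" "k < K"
    for g g' :: "real \<Rightarrow> real" and s k
  proof -
    have "((\<lambda>s. q k + s * d k) has_real_derivative d k) (at s)"
      by (auto intro!: derivative_eq_intros)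
    from DERIV_chain2[OF that(1)[OF seg[OF that(2-4)]] this] show ?thesis by simp
  qed
  have "\<forall>m s. m < 2 \<and> 0 \<le> s \<and> s \<le> 1 \<longrightarrow> (\<phi> m has_real_derivative \<phi> (Suc m) s) (at s)"
  proof (intro allI impI)
    fix m :: nat and s :: real assume "m < 2 \<and> 0 \<le> s \<and> s \<le> 1"
    then have "m = 0 \<or> m = 1" "0 \<le> s" "s \<le> 1" by auto
    then show "(\<phi> m has_real_derivative \<phi> (Suc m) s) (at s)"
      unfolding \<phi>_def
      by (auto intro!: DERIV_sum DERIV_cmult_right along_segment f' f'' simp: power2_eq_square
               simp flip: mult.assoc)
  qed
  from Taylor_up[of 2 \<phi> "\<phi> 0", OF _ _ this, of 0] obtain \<xi> where
    "0 < \<xi>" "\<xi> < 1" "\<phi> 0 1 = (\<Sum>m<2. \<phi> m 0 / fact m * (1 - 0) ^ m) + \<phi> 2 \<xi> / fact 2 * (1 - 0)^2"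
    by auto
  moreover from this(3) have "(\<Sum>k<K. f (p k) - f (q k) - f' (q k) * (p k - q k)) = \<phi> 2 \<xi> / 2"
    by (simp add: \<phi>_def d_def numeral_2_eq_2 sum_subtractf)
  ultimately show ?thesis using that by (simp add: \<phi>_def d_def)
qed

definition s_alpha :: "real \<Rightarrow> real \<Rightarrow> real" where
  "s_alpha \<alpha> x = (if \<alpha> = 0 then ln x else if \<alpha> = 1 then - (x * ln x)
     else x powr \<alpha> / (\<alpha> * (1 - \<alpha>)))"

definition ds_alpha :: "real \<Rightarrow> real \<Rightarrow> real" where
  "ds_alpha \<alpha> x = (if \<alpha> = 0 then 1 / x else if \<alpha> = 1 then - ln x - 1
     else x powr (\<alpha> - 1) / (1 - \<alpha>))"

lemma D_alpha_eq_separable: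
  "D_alpha \<alpha> K p q = (\<Sum>k<K. s_alpha \<alpha> (q k) - s_alpha \<alpha> (p k) + ds_alpha \<alpha> (q k) * (p k - q k))"
  unfolding D_alpha_def S_alpha_def dS_alpha_def s_alpha_def ds_alpha_def
  by (simp add: sum_subtractf sum_negf sum_divide_distrib sum.distrib algebra_simps)

lemma has_real_derivative_s_alpha:
  assumes "x > 0"
  shows "(s_alpha \<alpha> has_real_derivative ds_alpha \<alpha> x) (at x)"
proof -
  consider "\<alpha> = 0" | "\<alpha> = 1" | "\<alpha> \<noteq> 0" "\<alpha> \<noteq> 1" by blast
  then show ?thesis
  proof cases
    case 3
    have "((\<lambda>x. x powr \<alpha> / (\<alpha> * (1 - \<alpha>))) has_real_derivative
        \<alpha> * x powr (\<alpha> - 1) / (\<alpha> * (1 - \<alpha>))) (at x)"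
      by (intro DERIV_cdivide has_real_derivative_powr assms)
    with 3 show ?thesis unfolding s_alpha_def ds_alpha_def by simp
  qed (use assms in \<open>auto intro!: derivative_eq_intros simp: s_alpha_def[abs_def] ds_alpha_def field_simps\<close>)
qed

lemma has_real_derivative_ds_alpha:
  assumes "x > 0"
  shows "(ds_alpha \<alpha> has_real_derivative - (x powr (\<alpha> - 2))) (at x)"
proof -
  consider "\<alpha> = 0" | "\<alpha> = 1" | "\<alpha> \<noteq> 0" "\<alpha> \<noteq> 1" by blast
  then show ?thesis
  proof cases
    case 1
    have "x powr (-2) = 1 / x^2" using assms by (simp add: powr_minus powr_numeral divide_inverse)
    with 1 assms show ?thesis
      by (auto intro!: derivative_eq_intros simp: ds_alpha_def[abs_def] field_simps power2_eq_square)
  next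
    case 2
    have "x powr (-1) = 1 / x" using assms by (simp add: powr_minus divide_inverse)
    with 2 assms show ?thesis
      by (auto intro!: derivative_eq_intros simp: ds_alpha_def[abs_def] field_simps)
  next
    case 3
    have "((\<lambda>x. x powr (\<alpha> - 1) / (1 - \<alpha>)) has_real_derivative
        (\<alpha> - 1) * x powr (\<alpha> - 1 - 1) / (1 - \<alpha>)) (at x)"
      by (intro DERIV_cdivide has_real_derivative_powr assms)
    moreover have "(\<alpha> - 1) * x powr (\<alpha> - 1 - 1) / (1 - \<alpha>) = - (x powr (\<alpha> - 2))"
      using 3 by (simp add: field_simps)
    ultimately show ?thesis using 3 unfolding ds_alpha_def by simp
  qed
qed

text \<open>The Hessian of -S_\<alpha> at \<gamma> is diagonal with entries \<gamma>_k^(\<alpha>-2); this is its quadratic form.\<close>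

definition hessian_form :: "real \<Rightarrow> nat \<Rightarrow> (nat \<Rightarrow> real) \<Rightarrow> (nat \<Rightarrow> real) \<Rightarrow> real" where
  "hessian_form \<alpha> K \<gamma> v = (\<Sum>k<K. (v k)^2 * (\<gamma> k) powr (\<alpha> - 2))"

lemma hessian_form_nonneg: "hessian_form \<alpha> K \<gamma> v \<ge> 0"
  unfolding hessian_form_def by (intro sum_nonneg) simp

lemma hessian_form_scale: "hessian_form \<alpha> K \<gamma> (\<lambda>k. c * v k) = c^2 * hessian_form \<alpha> K \<gamma> v"
  unfolding hessian_form_def by (simp add: sum_distrib_left power_mult_distrib mult.assoc)

lemma D_alpha_lagrange:
  assumes "\<And>k. k < K \<Longrightarrow> p k > 0" "\<And>k. k < K \<Longrightarrow> q k > 0"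
  obtains \<xi> where "0 < \<xi>" "\<xi> < 1"
    "D_alpha \<alpha> K p q = hessian_form \<alpha> K (\<lambda>k. q k + \<xi> * (p k - q k)) (\<lambda>k. p k - q k) / 2"
proof -
  have "x \<in> {0<..} \<Longrightarrow> ((\<lambda>x. - s_alpha \<alpha> x) has_real_derivative - ds_alpha \<alpha> x) (at x)"
    "x \<in> {0<..} \<Longrightarrow> ((\<lambda>x. - ds_alpha \<alpha> x) has_real_derivative x powr (\<alpha> - 2)) (at x)" for x
    using DERIV_minus[OF has_real_derivative_s_alpha] DERIV_minus[OF has_real_derivative_ds_alpha]
    by auto
  moreover have "p k \<in> {0<..}" "q k \<in> {0<..}" if "k < K" for k
    using assms that by auto
  ultimately obtain \<xi> where "0 < \<xi>" "\<xi> < 1"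
    "(\<Sum>k<K. - s_alpha \<alpha> (p k) - - s_alpha \<alpha> (q k) - - ds_alpha \<alpha> (q k) * (p k - q k))
       = (\<Sum>k<K. (q k + \<xi> * (p k - q k)) powr (\<alpha> - 2) * (p k - q k)^2) / 2"
    by (rule separable_bregman_lagrange[OF convex_real_interval(3)])
  moreover have "D_alpha \<alpha> K p q
      = (\<Sum>k<K. - s_alpha \<alpha> (p k) - - s_alpha \<alpha> (q k) - - ds_alpha \<alpha> (q k) * (p k - q k))"
    unfolding D_alpha_eq_separable by (simp add: algebra_simps)
  ultimately show ?thesis
    using that unfolding hessian_form_def by (simp add: mult.commute)
qed

lemma relint_simplex_segment:
  assumes p: "p \<in> relint_simplex K" and q: "q \<in> relint_simplex K" and "0 \<le> s" "s \<le> 1"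
  shows "(\<lambda>k. q k + s * (p k - q k)) \<in> relint_simplex K"
proof -
  have "q k + s * (p k - q k) \<in> {0<..<1}" if "k < K" for k
    using p q that assms(3,4) unfolding relint_simplex_def
    by (intro convex_real_segment_mem[OF convex_real_interval(8)]) auto
  moreover have "(\<Sum>k<K. q k + s * (p k - q k)) = 1"
    using p q unfolding relint_simplex_def by (simp add: sum.distrib sum_subtractf flip: sum_distrib_left)
  ultimately show ?thesis unfolding relint_simplex_def by auto
qed

lemma D_alpha_quotient_eq_hessian_form:
  assumes p: "p \<in> relint_simplex K" and q: "q \<in> relint_simplex K" and "\<exists>k<K. p k \<noteq> q k"
  obtains v \<gamma> where "v \<in> T_set K" "\<gamma> \<in> relint_simplex K"
    "D_alpha \<alpha> K p q / (norm1 K (\<lambda>k. p k - q k))^2 = hessian_form \<alpha> K \<gamma> v / 2"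
proof -
  define d where "d k = p k - q k" for k
  define n where "n = norm1 K d"
  have "n > 0"
    using assms(3) unfolding n_def norm1_def d_def by (force intro: sum_pos2)
  obtain \<xi> where \<xi>: "0 < \<xi>" "\<xi> < 1"
    "D_alpha \<alpha> K p q = hessian_form \<alpha> K (\<lambda>k. q k + \<xi> * (p k - q k)) d / 2"
    using D_alpha_lagrange[of K p q] p q unfolding relint_simplex_def d_def by auto
  define v where "v k = d k / n" for k
  have "v \<in> T_set K"
    using \<open>n > 0\<close> p q unfolding T_set_def norm1_def v_def n_def d_def relint_simplex_def
    by (simp add: sum_subtractf flip: sum_divide_distrib)
  moreover have "D_alpha \<alpha> K p q / n^2 = hessian_form \<alpha> K (\<lambda>k. q k + \<xi> * (p k - q k)) v / 2"
  proof -
    have "d = (\<lambda>k. n * v k)"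
      using \<open>n > 0\<close> unfolding v_def by auto
    then show ?thesis
      using \<xi>(3) \<open>n > 0\<close> by (simp add: hessian_form_scale)
  qed
  moreover have "(\<lambda>k. q k + \<xi> * (p k - q k)) \<in> relint_simplex K"
    using relint_simplex_segment[OF p q] \<xi>(1,2) by simp
  ultimately show ?thesis
    using that unfolding n_def d_def by blast
qed

lemma T_set_nonzero_coord:
  assumes "v \<in> T_set K"
  shows "\<exists>k<K. v k \<noteq> 0"
proof (rule ccontr)
  assume "\<not> ?thesis"
  then have "norm1 K v = 0" unfolding norm1_def by simp
  with assms show False unfolding T_set_def by simp
qed

lemma eventually_ray_in_relint_simplex:
  assumes \<gamma>: "\<gamma> \<in> relint_simplex K" and v: "(\<Sum>k<K. v k) = 0"
  shows "\<forall>\<^sub>F s in at_right 0. (\<lambda>k. \<gamma> k + s * v k) \<in> relint_simplex K"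
proof -
  have "\<forall>\<^sub>F s in at_right 0. \<forall>k\<in>{..<K}. 0 < \<gamma> k + s * v k \<and> \<gamma> k + s * v k < 1"
  proof (intro eventually_ball_finite ballI)
    fix k assume "k \<in> {..<K}"
    moreover have "((\<lambda>s. \<gamma> k + s * v k) \<longlongrightarrow> \<gamma> k) (at_right 0)"
      by (auto intro!: tendsto_eq_intros)
    ultimately show "\<forall>\<^sub>F s in at_right 0. 0 < \<gamma> k + s * v k \<and> \<gamma> k + s * v k < 1"
      using \<gamma> unfolding relint_simplex_def by (intro eventually_conj order_tendstoD) auto
  qed simp
  moreover have "(\<Sum>k<K. \<gamma> k + s * v k) = 1" for s
    using \<gamma> v unfolding relint_simplex_def by (simp add: sum.distrib flip: sum_distrib_left)
  ultimately show ?thesis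
    unfolding relint_simplex_def by (auto elim: eventually_mono)
qed

lemma tendsto_hessian_form_ray:
  assumes "\<And>k. k < K \<Longrightarrow> \<gamma> k > 0"
  shows "((\<lambda>s. hessian_form \<alpha> K (\<lambda>k. \<gamma> k + s * v k) w) \<longlongrightarrow> hessian_form \<alpha> K \<gamma> w) (at_right 0)"
  unfolding hessian_form_def using assms
  by (auto intro!: tendsto_eq_intros simp: order.strict_iff_order)

lemma D_alpha_quotient_approx:
  assumes v: "v \<in> T_set K" and \<gamma>: "\<gamma> \<in> relint_simplex K" and "\<epsilon> > 0"
  obtains p q where "p \<in> relint_simplex K" "q \<in> relint_simplex K" "\<exists>k<K. p k \<noteq> q k"
    "2 * (D_alpha \<alpha> K p q / (norm1 K (\<lambda>k. p k - q k))^2) \<le> hessian_form \<alpha> K \<gamma> v + \<epsilon>"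
proof -
  define ray where "ray s = (\<lambda>k. \<gamma> k + s * v k)" for s
  have v_sums: "(\<Sum>k<K. v k) = 0" "norm1 K v = 1"
    using v unfolding T_set_def by auto
  have "\<forall>\<^sub>F s in at_right 0. hessian_form \<alpha> K (ray s) v < hessian_form \<alpha> K \<gamma> v + \<epsilon>"
    using \<gamma> \<open>\<epsilon> > 0\<close> unfolding ray_def relint_simplex_def
    by (intro order_tendstoD(2)[OF tendsto_hessian_form_ray]) auto
  moreover have "\<forall>\<^sub>F s in at_right 0. ray s \<in> relint_simplex K"
    unfolding ray_def using eventually_ray_in_relint_simplex[OF \<gamma> v_sums(1)] .
  ultimately have "\<forall>\<^sub>F s in at_right 0.
      hessian_form \<alpha> K (ray s) v < hessian_form \<alpha> K \<gamma> v + \<epsilon> \<and> ray s \<in> relint_simplex K"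
    by (rule eventually_conj)
  then obtain b where "b > 0" and b: "\<And>s. 0 < s \<Longrightarrow> s < b \<Longrightarrow>
      hessian_form \<alpha> K (ray s) v < hessian_form \<alpha> K \<gamma> v + \<epsilon> \<and> ray s \<in> relint_simplex K"
    unfolding eventually_at_right_field by auto
  define t where "t = b / 2"
  have t: "0 < t" "t < b" unfolding t_def using \<open>b > 0\<close> by auto
  have ray_diff: "(\<lambda>k. ray t k - \<gamma> k) = (\<lambda>k. t * v k)"
    unfolding ray_def by simp
  obtain \<xi> where \<xi>: "0 < \<xi>" "\<xi> < 1"
    "D_alpha \<alpha> K (ray t) \<gamma> = hessian_form \<alpha> K (\<lambda>k. \<gamma> k + \<xi> * (ray t k - \<gamma> k)) (\<lambda>k. ray t k - \<gamma> k) / 2"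
    by (rule D_alpha_lagrange[of K "ray t" \<gamma>])
       (use b[OF t] \<gamma> in \<open>auto simp: relint_simplex_def\<close>)
  have "(\<lambda>k. \<gamma> k + \<xi> * (ray t k - \<gamma> k)) = ray (\<xi> * t)"
    unfolding ray_def by auto
  with \<xi>(3) ray_diff have D_eq: "D_alpha \<alpha> K (ray t) \<gamma> = t^2 * hessian_form \<alpha> K (ray (\<xi> * t)) v / 2"
    by (simp add: hessian_form_scale)
  have "0 < \<xi> * t" "\<xi> * t < b"
    using \<xi> t by (auto intro: order.strict_trans1[OF mult_left_le_one_le])
  then have "hessian_form \<alpha> K (ray (\<xi> * t)) v < hessian_form \<alpha> K \<gamma> v + \<epsilon>"
    using b by blast
  moreover have "norm1 K (\<lambda>k. ray t k - \<gamma> k) = t"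
    using v_sums t unfolding ray_diff norm1_def by (simp add: abs_mult flip: sum_distrib_left)
  moreover have "\<exists>k<K. ray t k \<noteq> \<gamma> k"
    using T_set_nonzero_coord[OF v] t unfolding ray_def by auto
  ultimately show ?thesis
    using that[OF conjunct2[OF b[OF t]] \<gamma>] D_eq t by simp
qed

lemma mult_cInf_eq_cInf_of_approx:
  fixes A B :: "real set" and c :: real
  assumes "c > 0" "B \<noteq> {}" "bdd_below B"
    and into: "\<And>a. a \<in> A \<Longrightarrow> c * a \<in> B"
    and approx: "\<And>b \<epsilon>. b \<in> B \<Longrightarrow> \<epsilon> > 0 \<Longrightarrow> \<exists>a\<in>A. c * a \<le> b + \<epsilon>"
  shows "c * Inf A = Inf B"
proof (rule antisym)
  have "A \<noteq> {}" using approx[of _ 1] \<open>B \<noteq> {}\<close> by fastforce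
  have lower: "Inf B \<le> c * a" if "a \<in> A" for a
    using cInf_lower[OF into[OF that] \<open>bdd_below B\<close>] .
  then have "Inf B / c \<le> Inf A"
    using \<open>A \<noteq> {}\<close> \<open>c > 0\<close> by (intro cInf_greatest) (auto simp: divide_le_eq mult.commute)
  then show "Inf B \<le> c * Inf A"
    using \<open>c > 0\<close> by (simp add: divide_le_eq mult.commute)
  have "bdd_below A"
    using lower \<open>c > 0\<close> by (intro bdd_belowI[of _ "Inf B / c"]) (simp add: divide_le_eq mult.commute)
  show "c * Inf A \<le> Inf B"
  proof (rule cInf_greatest[OF \<open>B \<noteq> {}\<close>], rule field_le_epsilon)
    fix b \<epsilon> :: real assume "b \<in> B" "\<epsilon> > 0"
    then obtain a where "a \<in> A" "c * a \<le> b + \<epsilon>" using approx by blast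
    moreover have "c * Inf A \<le> c * a"
      using cInf_lower[OF \<open>a \<in> A\<close> \<open>bdd_below A\<close>] \<open>c > 0\<close> by simp
    ultimately show "c * Inf A \<le> b + \<epsilon>" by linarith
  qed
qed

lemma T_set_nonempty:
  assumes "K \<ge> 2"
  shows "T_set K \<noteq> {}"
proof -
  have "{..<K} = {0, 1} \<union> {2..<K}" using assms by auto
  then have "(\<lambda>k. if k = 0 then 1/2 else if k = 1 then - 1/2 else 0) \<in> T_set K"
    unfolding T_set_def norm1_def by (simp add: sum.union_disjoint)
  then show ?thesis by blast
qed

lemma relint_simplex_nonempty:
  assumes "K \<ge> 2"
  shows "relint_simplex K \<noteq> {}"
proof -
  have "(\<lambda>k. 1 / real K) \<in> relint_simplex K"
    using assms unfolding relint_simplex_def by auto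
  then show ?thesis by blast
qed

theorem proposition1:
  fixes K :: nat and \<alpha> :: real
  assumes "K \<ge> 2"
  shows "C_alpha \<alpha> K = Inf {(\<Sum>k<K. (v k)^2 * (\<gamma> k) powr (\<alpha> - 2)) | v \<gamma>.
                 v \<in> T_set K \<and> \<gamma> \<in> relint_simplex K}"
proof -
  let ?A = "{D_alpha \<alpha> K p q / (norm1 K (\<lambda>k. p k - q k))^2 | p q.
      p \<in> relint_simplex K \<and> q \<in> relint_simplex K \<and> (\<exists>k<K. p k \<noteq> q k)}"
  let ?B = "{hessian_form \<alpha> K \<gamma> v | v \<gamma>. v \<in> T_set K \<and> \<gamma> \<in> relint_simplex K}"
  have "2 * Inf ?A = Inf ?B"
  proof (rule mult_cInf_eq_cInf_of_approx)
    show "?B \<noteq> {}"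
      using T_set_nonempty[OF assms] relint_simplex_nonempty[OF assms] by blast
    show "bdd_below ?B"
      using hessian_form_nonneg by (intro bdd_belowI[of _ 0]) blast
  next
    fix a assume "a \<in> ?A"
    then obtain p q where pq: "p \<in> relint_simplex K" "q \<in> relint_simplex K" "\<exists>k<K. p k \<noteq> q k"
      and a: "a = D_alpha \<alpha> K p q / (norm1 K (\<lambda>k. p k - q k))^2"
      by blast
    obtain v \<gamma> where "v \<in> T_set K" "\<gamma> \<in> relint_simplex K" "a = hessian_form \<alpha> K \<gamma> v / 2"
      unfolding a by (rule D_alpha_quotient_eq_hessian_form[OF pq])
    moreover from this(3) have "2 * a = hessian_form \<alpha> K \<gamma> v" by simp
    ultimately show "2 * a \<in> ?B" by blast
  next
    fix b \<epsilon> :: real assume "b \<in> ?B" "\<epsilon> > 0"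
    then obtain v \<gamma> where v\<gamma>: "v \<in> T_set K" "\<gamma> \<in> relint_simplex K" and b: "b = hessian_form \<alpha> K \<gamma> v"
      by blast
    obtain p q where "p \<in> relint_simplex K" "q \<in> relint_simplex K" "\<exists>k<K. p k \<noteq> q k"
      "2 * (D_alpha \<alpha> K p q / (norm1 K (\<lambda>k. p k - q k))^2) \<le> b + \<epsilon>"
      unfolding b by (rule D_alpha_quotient_approx[OF v\<gamma> \<open>\<epsilon> > 0\<close>])
    then show "\<exists>a\<in>?A. 2 * a \<le> b + \<epsilon>" by blast
  qed simp
  then show ?thesis
    unfolding C_alpha_def hessian_form_def .
qed

end
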